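(* Let $a,b$ be positive integers and $m\ge 2$, and let $\vec k=(a,b,\dots,b)$ be the vector of length $m$ with first entry $a$ and all other entries equal to $b$. Then $\widetilde{C}_{\vec k}(q,t)=\sum_{\pi\in\mathcal D_{\vec k}}q^{\mathrm{area}(\pi)}t^{\mathrm{depth}(\pi)}$ is $q,t$-symmetric, i.e. $\widetilde{C}_{\vec k}(q,t)=\widetilde{C}_{\vec k}(t,q)$. In particular, $\widetilde{C}_{\vec k}(q,t)$ is $q,t$-symmetric for every vector $\vec k$ of positive integers of length $2$.
   Context: For $\vec k=(k_1,\dots,k_\ell)$ put $|\vec k|=\sum k_i$, $N=|\vec k|+\ell$. A $\vec k$-Dyck path is a word $\pi=\pi_1\cdots\pi_N$ containing the letters $S^{k_1},\dots,S^{k_\ell}$ exactly once each and in this order, together with $|\vec k|$ letters $W$, such that all starting ranks are nonnegative, where $r_1=0$, $r_{i+1}=r_i+k_j$ if $\pi_i=S^{k_j}$ and $r_{i+1}=r_i-1$ if $\pi_i=W$. $\mathcal D_{\vec k}$ is the set of such paths. $\mathrm{area}(\pi)=\sum_j a_j$ where $a_j$ is the starting rank of $S^{k_j}$. Filling algorithm $\eta_*$: in a tableau of $\ell$ top-justified columns, column $i$ having $k_i+1$ cells, place $1$ at the top of column 1; for $i=2,\dots,N$, call an entry active if it is currently the bottom entry of a column $i'$ not yet containing $k_{i'}+1$ entries; if $\pi_i=W$ place $i$ immediately below the largest active entry, otherwise place $i$ at the top of the first empty column. Ranking algorithm $\gamma_*$: column 1 gets ranks $0,\dots,k_1$ top to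 bottom; for $i\ge2$, if the top entry of column $i$ of $\eta_*(\pi)$ is $A+1$ and $A$ has rank $\alpha$, column $i$ gets ranks $\alpha,\dots,\alpha+k_i$ top to bottom. $\mathrm{depth}(\pi)$ is the sum of the first-row ranks. *)

theory Defs
  imports Main
begin

text \<open>Letters of a k-Dyck word: S j stands for the letter S^{k_j} (0-based index j),
  W is the west step.\<close>
datatype letter = S nat | W

text \<open>Starting rank of the letter at 0-based position i (r_{i+1} in the paper).\<close>
definition srank :: "nat list \<Rightarrow> letter list \<Rightarrow> nat \<Rightarrow> int" where
  "srank k \<pi> i = sum_list (map (\<lambda>x. case x of S j \<Rightarrow> int (k ! j) | W \<Rightarrow> -1) (take i \<pi>))"

definition kdyck :: "nat list \<Rightarrow> letter list \<Rightarrow> bool" where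
  "kdyck k \<pi> \<longleftrightarrow>
     length \<pi> = sum_list k + length k
   \<and> filter (\<lambda>x. x \<noteq> W) \<pi> = map S [0..<length k]
   \<and> (\<forall>i < length \<pi>. 0 \<le> srank k \<pi> i)"

definition Dyck :: "nat list \<Rightarrow> letter list set" where
  "Dyck k = {\<pi>. kdyck k \<pi>}"

definition pos_of :: "'b list \<Rightarrow> 'b \<Rightarrow> nat" where
  "pos_of xs a = (LEAST p. p < length xs \<and> xs ! p = a)"

definition area :: "nat list \<Rightarrow> letter list \<Rightarrow> nat" where
  "area k \<pi> = (\<Sum>j<length k. nat (srank k \<pi> (pos_of \<pi> (S j))))"

text \<open>Filling algorithm eta_*: a tableau is a list of columns, each column a list of
  entries from top to bottom.\<close>
definition active_cols :: "nat list \<Rightarrow> nat list list \<Rightarrow> nat set" where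
  "active_cols k cols = {c. c < length k \<and> cols ! c \<noteq> [] \<and> length (cols ! c) < k ! c + 1}"

definition fill_step :: "nat list \<Rightarrow> nat list list \<Rightarrow> nat \<times> letter \<Rightarrow> nat list list" where
  "fill_step k cols ix = (case ix of (i, x) \<Rightarrow>
     (case x of
        W \<Rightarrow> (let c = (ARG_MAX (\<lambda>c. last (cols ! c)) c. c \<in> active_cols k cols)
              in cols[c := cols ! c @ [i]])
      | S _ \<Rightarrow> (let c = (LEAST c. c < length cols \<and> cols ! c = [])
              in cols[c := [i]])))"

definition fill :: "nat list \<Rightarrow> letter list \<Rightarrow> nat list list" where
  "fill k \<pi> = foldl (fill_step k) ([1] # replicate (length k - 1) [])
                    (zip [2..<length \<pi> + 1] (tl \<pi>))"

text \<open>Ranking algorithm gamma_*: we record the rank of the top entry of each column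
  (column c gets ranks base_c, ..., base_c + k_c from top to bottom).\<close>
definition col_of :: "nat list list \<Rightarrow> nat \<Rightarrow> nat" where
  "col_of T A = (THE c. c < length T \<and> A \<in> set (T ! c))"

definition bases :: "nat list list \<Rightarrow> nat list" where
  "bases T = foldl (\<lambda>bs c. bs @ [(let A = hd (T ! c) - 1; c' = col_of T A
                                    in bs ! c' + pos_of (T ! c') A)])
                   [0] [1..<length T]"

definition depth :: "nat list \<Rightarrow> letter list \<Rightarrow> nat" where
  "depth k \<pi> = sum_list (bases (fill k \<pi>))"

definition Ctil :: "nat list \<Rightarrow> 'a::comm_semiring_1 \<Rightarrow> 'a \<Rightarrow> 'a" where
  "Ctil k q t = (\<Sum>\<pi>\<in>Dyck k. q ^ area k \<pi> * t ^ depth k \<pi>)"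

end

theory Submission
  imports Defs "HOL-Computational_Algebra.Formal_Power_Series"
begin

text \<open>
  Read a \<open>k\<close>-Dyck word letter by letter and keep a stack of cells: on top the cell of the
  latest entry of the filling \<open>\<eta>\<^sub>*\<close>, below it the still empty cells of the active columns in
  the order in which west steps will fill them. A cell records the rank of the path at the moment
  it is filled and the rank that \<open>\<gamma>\<^sub>*\<close> gives it. A letter \<open>W\<close> pops the stack; a letter
  \<open>S j\<close> read while the top cell is \<open>x\<close> contributes the starting rank \<open>fst x\<close> to the area
  and the rank \<open>snd x\<close> of the preceding entry to the depth, and replaces \<open>x\<close> by the cells of
  the new column. So \<open>Ctil k\<close> is a weighted sum over the runs of this stack automaton.

  When all columns but the first have height \<open>b + 1\<close>, the generating function of the
  completions of a stack (a power series in the number of columns still to come) is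
  multiplicative under concatenation of stacks, hence invariant under reversal of the stack.
  Exchanging \<open>q\<close> and \<open>t\<close> swaps the two ranks in every cell, and this turns a new column into
  the reverse of a new column. As the first column starts from the cell \<open>(0, 0)\<close>, \<open>Ctil k\<close>
  is symmetric.
\<close>

unbundle fps_syntax

section \<open>Completions of a stack\<close>

text \<open>The \<open>h + 1\<close> cells, top cell first, of a column started while the top of the stack is \<open>x\<close>.\<close>

definition column_cells :: "nat \<Rightarrow> nat \<times> nat \<Rightarrow> (nat \<times> nat) list" where
  "column_cells h x = map (\<lambda>p. (fst x + (h - p), snd x + p)) [0..<Suc h]"

lemma column_cells_ne [simp]: "column_cells h x \<noteq> []"
  by (simp add: column_cells_def)

lemma length_column_cells [simp]: "length (column_cells h x) = Suc h"
  by (simp add: column_cells_def)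

lemma map_swap_column_cells:
  "map prod.swap (column_cells h x) = rev (column_cells h (prod.swap x))"
  by (rule nth_equalityI) (auto simp: column_cells_def rev_nth simp del: upt_Suc)

text \<open>Weighted count of the ways to run the automaton from the stack \<open>L\<close> to a single cell
  with exactly \<open>n\<close> further columns, all of height \<open>b + 1\<close>.\<close>

function completions :: "nat \<Rightarrow> 'a::comm_semiring_1 \<Rightarrow> 'a \<Rightarrow> (nat \<times> nat) list \<Rightarrow> nat \<Rightarrow> 'a" where
  "completions b q t [] n = 0"
| "completions b q t [x] n =
     (if n = 0 then 1
      else q ^ fst x * t ^ snd x * completions b q t (column_cells b x) (n - 1))"
| "completions b q t (x # y # L) n = completions b q t (y # L) n +
     (if n = 0 then 0
      else q ^ fst x * t ^ snd x * completions b q t (column_cells b x @ y # L) (n - 1))"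
  by pat_completeness auto
termination
  by (relation "measure (\<lambda>(b, q, t, L, n). Suc b * n + length L)")
     (auto simp: gr0_conv_Suc)

definition completions_fps :: "nat \<Rightarrow> 'a::comm_semiring_1 \<Rightarrow> 'a \<Rightarrow> (nat \<times> nat) list \<Rightarrow> 'a fps" where
  "completions_fps b q t L = Abs_fps (completions b q t L)"

lemma completions_fps_singleton:
  "completions_fps b q t [x] =
     1 + fps_X * fps_const (q ^ fst x * t ^ snd x) * completions_fps b q t (column_cells b x)"
  by (rule fps_ext) (simp add: completions_fps_def mult.assoc)

lemma completions_fps_Cons:
  "C \<noteq> [] \<Longrightarrow> completions_fps b q t (x # C) = completions_fps b q t C
     + fps_X * fps_const (q ^ fst x * t ^ snd x) * completions_fps b q t (column_cells b x @ C)"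
  by (cases C) (auto intro!: fps_ext simp: completions_fps_def mult.assoc)

text \<open>The cells of \<open>C\<close> are not touched before those of \<open>A\<close> are used up, so the completions
  of \<open>A @ C\<close> split into a completion of \<open>A\<close> followed by one of \<open>C\<close>.\<close>

lemma completions_fps_append:
  assumes "A \<noteq> []" "C \<noteq> []"
  shows "completions_fps b q t (A @ C) = completions_fps b q t A * completions_fps b q t C"
proof (rule fps_ext)
  fix n
  show "completions_fps b q t (A @ C) $ n = (completions_fps b q t A * completions_fps b q t C) $ n"
    using assms
  proof (induction b q t A n rule: completions.induct)
    case (2 b q t x n)
    then show ?case
      by (simp add: completions_fps_Cons completions_fps_singleton distrib_right mult.assoc)
  next
    case (3 b q t x y L n)
    then show ?case
      by (simp add: completions_fps_Cons distrib_right mult.assoc)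
  qed simp
qed

lemma completions_fps_rev: "completions_fps b q t (rev A) = completions_fps b q t A"
proof (induction A)
  case (Cons x A)
  show ?case
  proof (cases "A = []")
    case False
    then have "completions_fps b q t (rev (x # A)) = completions_fps b q t A * completions_fps b q t [x]"
      by (simp add: completions_fps_append Cons.IH)
    also have "\<dots> = completions_fps b q t [x] * completions_fps b q t A"
      by (rule mult.commute)
    also have "\<dots> = completions_fps b q t (x # A)"
      using completions_fps_append [of "[x]" A b q t] False by simp
    finally show ?thesis .
  qed simp
qed simp

lemma completions_rev [simp]: "completions b q t (rev A) n = completions b q t A n"
  using arg_cong [OF completions_fps_rev, of "\<lambda>F. F $ n"] by (simp add: completions_fps_def)

lemma completions_rev_append:
  assumes "A \<noteq> []" "C \<noteq> []"
  shows "completions b q t (rev A @ C) n = completions b q t (A @ C) n"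
proof -
  have "completions_fps b q t (rev A @ C) = completions_fps b q t (A @ C)"
    using assms by (simp add: completions_fps_append completions_fps_rev)
  then show ?thesis
    by (metis completions_fps_def fps_nth_Abs_fps)
qed

lemma completions_swap:
  "completions b q t L n = completions b t q (map prod.swap L) n"
proof (induction b q t L n rule: completions.induct)
  case (3 b q t x y L n)
  then show ?case
    by (simp add: map_swap_column_cells completions_rev_append mult.commute)
qed (simp_all add: map_swap_column_cells mult.commute)

lemma completions_column_symmetric:
  "completions b q t (column_cells a (0, 0)) n = completions b t q (column_cells a (0, 0)) n"
  using completions_swap [of b q t "column_cells a (0, 0)"] by (simp add: map_swap_column_cells)

section \<open>The stack automaton of \<open>k\<close>-Dyck paths\<close>

text \<open>A state is (stack, number of \<open>S\<close> letters read, area so far, depth so far).\<close>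

type_synonym state = "(nat \<times> nat) list \<times> nat \<times> nat \<times> nat"

fun dyck_step :: "nat list \<Rightarrow> state \<Rightarrow> letter \<Rightarrow> state" where
  "dyck_step k (L, j, A, D) (S i) =
     (column_cells (k ! j) (hd L) @ tl L, Suc j, A + fst (hd L), D + snd (hd L))"
| "dyck_step k (L, j, A, D) W = (tl L, j, A, D)"

fun dyck_enabled :: "nat list \<Rightarrow> state \<Rightarrow> letter \<Rightarrow> bool" where
  "dyck_enabled k (L, j, A, D) (S i) \<longleftrightarrow> i = j \<and> j < length k"
| "dyck_enabled k (L, j, A, D) W \<longleftrightarrow> 2 \<le> length L"

fun dyck_final :: "nat list \<Rightarrow> state \<Rightarrow> bool" where
  "dyck_final k (L, j, A, D) \<longleftrightarrow> length L = 1 \<and> j = length k"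

fun dyck_accepts :: "nat list \<Rightarrow> state \<Rightarrow> letter list \<Rightarrow> bool" where
  "dyck_accepts k st [] \<longleftrightarrow> dyck_final k st"
| "dyck_accepts k st (x # xs) \<longleftrightarrow> dyck_enabled k st x \<and> dyck_accepts k (dyck_step k st x) xs"

definition dyck_init :: state where
  "dyck_init = ([(0, 0)], 0, 0, 0)"

definition dyck_state :: "nat list \<Rightarrow> letter list \<Rightarrow> nat \<Rightarrow> state" where
  "dyck_state k \<pi> n = foldl (dyck_step k) dyck_init (take n \<pi>)"

lemma dyck_state_Suc:
  "n < length \<pi> \<Longrightarrow> dyck_state k \<pi> (Suc n) = dyck_step k (dyck_state k \<pi> n) (\<pi> ! n)"
  by (simp add: dyck_state_def take_Suc_conv_app_nth)

lemma dyck_accepts_iff: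
  "dyck_accepts k st xs \<longleftrightarrow>
     (\<forall>n<length xs. dyck_enabled k (foldl (dyck_step k) st (take n xs)) (xs ! n))
     \<and> dyck_final k (foldl (dyck_step k) st xs)"
  by (induction xs arbitrary: st) (simp_all add: All_less_Suc2 del: dyck_final.simps)

lemma srank_0 [simp]: "srank k \<pi> 0 = 0"
  by (simp add: srank_def)

lemma srank_Suc:
  "n < length \<pi> \<Longrightarrow>
     srank k \<pi> (Suc n) = srank k \<pi> n + (case \<pi> ! n of S j \<Rightarrow> int (k ! j) | W \<Rightarrow> -1)"
  by (simp add: srank_def take_Suc_conv_app_nth)

lemma srank_length:
  assumes "filter (\<lambda>x. x \<noteq> W) \<pi> = map S [0..<length k]"
  shows "srank k \<pi> (length \<pi>) = int (sum_list k) - int (length \<pi> - length k)"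
proof -
  let ?f = "\<lambda>x. case x of S j \<Rightarrow> int (k ! j) | W \<Rightarrow> -1"
  have "sum_list (map ?f \<pi>) = sum_list (map ?f (filter (\<lambda>x. x \<noteq> W) \<pi>))
      + sum_list (map ?f (filter (\<lambda>x. x = W) \<pi>))"
    by (induction \<pi>) (auto simp: ac_simps)
  also have "sum_list (map ?f (filter (\<lambda>x. x \<noteq> W) \<pi>)) = int (sum_list k)"
    using assms by (simp add: comp_def sum_list_sum_nth interv_sum_list_conv_sum_set_nat)
  also have "sum_list (map ?f (filter (\<lambda>x. x = W) \<pi>)) = - int (length (filter (\<lambda>x. x = W) \<pi>))"
    by (induction \<pi>) auto
  also have "length (filter (\<lambda>x. x = W) \<pi>) = length \<pi> - length k"
    using sum_length_filter_compl [of "\<lambda>x. x \<noteq> W" \<pi>] assms by simp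
  finally show ?thesis
    by (simp add: srank_def)
qed

lemma pos_of_first:
  assumes "n < length xs" "xs ! n = a" "a \<notin> set (take n xs)"
  shows "pos_of xs a = n"
  unfolding pos_of_def
proof (rule Least_equality)
  fix p assume p: "p < length xs \<and> xs ! p = a"
  show "n \<le> p"
  proof (rule ccontr)
    assume "\<not> n \<le> p"
    then have "a \<in> set (take n xs)"
      using p by (auto simp: in_set_conv_nth)
    then show False
      using assms by simp
  qed
qed (use assms in simp)

definition consecutive_ranks :: "(nat \<times> nat) list \<Rightarrow> bool" where
  "consecutive_ranks L \<longleftrightarrow> (\<forall>i<length L. fst (L ! i) + i + 1 = length L)"

lemma consecutive_ranks_hd:
  "consecutive_ranks L \<Longrightarrow> L \<noteq> [] \<Longrightarrow> fst (hd L) + 1 = length L"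
  by (auto simp: consecutive_ranks_def hd_conv_nth)

lemma consecutive_ranks_tl:
  assumes "consecutive_ranks L"
  shows "consecutive_ranks (tl L)"
  unfolding consecutive_ranks_def
proof (intro allI impI)
  fix i assume "i < length (tl L)"
  then have "Suc i < length L"
    by simp
  then have "fst (L ! Suc i) + Suc i + 1 = length L"
    using assms unfolding consecutive_ranks_def by blast
  then show "fst (tl L ! i) + i + 1 = length (tl L)"
    by (simp add: nth_tl)
qed

lemma consecutive_ranks_push:
  assumes "consecutive_ranks L" "L \<noteq> []"
  shows "consecutive_ranks (column_cells h (hd L) @ tl L)"
  unfolding consecutive_ranks_def
proof (intro allI impI)
  let ?L' = "column_cells h (hd L) @ tl L"
  fix p assume p: "p < length ?L'"
  have len: "length ?L' = length L + h"
    using assms(2) by simp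
  show "fst (?L' ! p) + p + 1 = length ?L'"
  proof (cases "p < Suc h")
    case True
    then show ?thesis
      using consecutive_ranks_hd [OF assms] len
      by (simp add: nth_append column_cells_def del: upt_Suc)
  next
    case False
    then have "?L' ! p = L ! (p - h)" and "p - h < length L"
      using p len assms(2) by (simp_all add: nth_append nth_tl Suc_diff_Suc)
    moreover from this(2) have "fst (L ! (p - h)) + (p - h) + 1 = length L"
      using assms(1) by (simp add: consecutive_ranks_def)
    ultimately show ?thesis
      using False len by simp
  qed
qed

definition area_inv :: "nat list \<Rightarrow> letter list \<Rightarrow> nat \<Rightarrow> state \<Rightarrow> bool" where
  "area_inv k \<pi> n st \<longleftrightarrow> (case st of (L, j, A, D) \<Rightarrow>
     L \<noteq> [] \<and> consecutive_ranks L
     \<and> int (length L) = srank k \<pi> n + 1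
     \<and> filter (\<lambda>x. x \<noteq> W) (take n \<pi>) = map S [0..<j]
     \<and> A = (\<Sum>i<j. nat (srank k \<pi> (pos_of \<pi> (S i)))))"

lemma area_inv_step:
  assumes n: "n < length \<pi>" and inv: "area_inv k \<pi> n (L, j, A, D)"
    and enabled: "dyck_enabled k (L, j, A, D) (\<pi> ! n)"
  shows "area_inv k \<pi> (Suc n) (dyck_step k (L, j, A, D) (\<pi> ! n))"
proof -
  have L: "L \<noteq> []" "consecutive_ranks L" and rank: "int (length L) = srank k \<pi> n + 1"
    and letters: "filter (\<lambda>x. x \<noteq> W) (take n \<pi>) = map S [0..<j]"
    and area: "A = (\<Sum>i<j. nat (srank k \<pi> (pos_of \<pi> (S i))))"
    using inv by (auto simp: area_inv_def)
  have take_Suc: "take (Suc n) \<pi> = take n \<pi> @ [\<pi> ! n]"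
    using n by (simp add: take_Suc_conv_app_nth)
  show ?thesis
  proof (cases "\<pi> ! n")
    case (S i)
    with enabled have i: "i = j" by simp
    have "S j \<notin> set (filter (\<lambda>x. x \<noteq> W) (take n \<pi>))"
      unfolding letters by auto
    then have "S j \<notin> set (take n \<pi>)"
      by simp
    then have "pos_of \<pi> (S j) = n"
      using pos_of_first [OF n] S i by simp
    then have "A + fst (hd L) = (\<Sum>i<Suc j. nat (srank k \<pi> (pos_of \<pi> (S i))))"
      using area rank consecutive_ranks_hd [OF L(2,1)] by simp
    moreover have "int (length (column_cells (k ! j) (hd L) @ tl L)) = srank k \<pi> (Suc n) + 1"
      using L(1) rank srank_Suc [OF n, of k] S i by (cases L) auto
    moreover have "filter (\<lambda>x. x \<noteq> W) (take (Suc n) \<pi>) = map S [0..<Suc j]"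
      using letters take_Suc S i by simp
    ultimately show ?thesis
      using S i consecutive_ranks_push [OF L(2,1)] by (simp add: area_inv_def)
  next
    case W
    with enabled have "2 \<le> length L" by simp
    then have "tl L \<noteq> []"
      by (cases L) auto
    moreover have "int (length (tl L)) = srank k \<pi> (Suc n) + 1"
      using L(1) rank srank_Suc [OF n, of k] W by (cases L) auto
    ultimately show ?thesis
      using W letters area take_Suc consecutive_ranks_tl [OF L(2)] by (simp add: area_inv_def)
  qed
qed

lemma area_inv_dyck_state:
  assumes "n \<le> length \<pi>" "\<forall>m<n. dyck_enabled k (dyck_state k \<pi> m) (\<pi> ! m)"
  shows "area_inv k \<pi> n (dyck_state k \<pi> n)"
  using assms
proof (induction n)
  case 0
  then show ?case
    by (simp add: dyck_state_def dyck_init_def area_inv_def consecutive_ranks_def)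
next
  case (Suc n)
  obtain L j A D where st: "dyck_state k \<pi> n = (L, j, A, D)"
    by (cases "dyck_state k \<pi> n")
  have "area_inv k \<pi> n (L, j, A, D)"
    using Suc st by simp
  moreover have "dyck_enabled k (L, j, A, D) (\<pi> ! n)"
    using Suc.prems(2) st by (metis lessI)
  ultimately show ?case
    using Suc.prems(1) st by (simp add: dyck_state_Suc area_inv_step)
qed

lemma kdyck_srank_nonneg:
  assumes "kdyck k \<pi>" "n \<le> length \<pi>"
  shows "0 \<le> srank k \<pi> n"
proof (cases "n = length \<pi>")
  case True
  then show ?thesis
    using assms(1) srank_length [of \<pi> k] by (simp add: kdyck_def)
qed (use assms in \<open>simp add: kdyck_def\<close>)

lemma kdyck_enabled:
  assumes kd: "kdyck k \<pi>" and n: "n < length \<pi>" and inv: "area_inv k \<pi> n (L, j, A, D)"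
  shows "dyck_enabled k (L, j, A, D) (\<pi> ! n)"
proof (cases "\<pi> ! n")
  case (S i)
  have letters: "filter (\<lambda>x. x \<noteq> W) (take n \<pi>) = map S [0..<j]"
    using inv by (simp add: area_inv_def)
  have "map S [0..<length k] = filter (\<lambda>x. x \<noteq> W) (take (Suc n) \<pi> @ drop (Suc n) \<pi>)"
    using kd by (simp add: kdyck_def)
  also have "\<dots> = map S [0..<j] @ S i # filter (\<lambda>x. x \<noteq> W) (drop (Suc n) \<pi>)"
    using letters S n by (simp add: take_Suc_conv_app_nth)
  finally have split: "map S [0..<length k] = map S [0..<j] @ S i # filter (\<lambda>x. x \<noteq> W) (drop (Suc n) \<pi>)" .
  have "j < length k"
    using arg_cong [OF split, of length] by simp
  moreover have "i = j"
    using arg_cong [OF split, of "\<lambda>xs. xs ! j"] calculation by (simp add: nth_append)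
  ultimately show ?thesis
    using S by simp
next
  case W
  have "0 \<le> srank k \<pi> (Suc n)"
    using kdyck_srank_nonneg [OF kd] n by simp
  then show ?thesis
    using inv W srank_Suc [OF n, of k] by (simp add: area_inv_def)
qed

lemma kdyck_imp_dyck_accepts:
  assumes kd: "kdyck k \<pi>"
  shows "dyck_accepts k dyck_init \<pi>"
proof -
  have enabled: "\<forall>m<n. dyck_enabled k (dyck_state k \<pi> m) (\<pi> ! m)" if "n \<le> length \<pi>" for n
    using that
  proof (induction n)
    case (Suc n)
    obtain L j A D where st: "dyck_state k \<pi> n = (L, j, A, D)"
      by (cases "dyck_state k \<pi> n")
    have "area_inv k \<pi> n (L, j, A, D)"
      using area_inv_dyck_state [of n \<pi> k] Suc st by simp
    then show ?case
      using Suc kdyck_enabled [OF kd] st by (auto simp: less_Suc_eq)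
  qed simp
  obtain L j A D where st: "dyck_state k \<pi> (length \<pi>) = (L, j, A, D)"
    by (cases "dyck_state k \<pi> (length \<pi>)")
  have inv: "area_inv k \<pi> (length \<pi>) (L, j, A, D)"
    using area_inv_dyck_state [of "length \<pi>" \<pi> k] enabled [of "length \<pi>"] st by simp
  then have "map S [0..<j] = map S [0..<length k]"
    using kd by (simp add: area_inv_def kdyck_def)
  then have "j = length k"
    using map_eq_imp_length_eq by fastforce
  moreover have "length L = 1"
    using inv kd srank_length [of \<pi> k] by (simp add: area_inv_def kdyck_def)
  ultimately show ?thesis
    using enabled [of "length \<pi>"] st by (simp add: dyck_accepts_iff dyck_state_def)
qed

lemma dyck_accepts_area_inv:
  assumes "dyck_accepts k dyck_init \<pi>" "n \<le> length \<pi>"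
  shows "area_inv k \<pi> n (dyck_state k \<pi> n)"
  using assms area_inv_dyck_state by (simp add: dyck_accepts_iff dyck_state_def)

lemma dyck_accepts_imp_kdyck_area:
  assumes acc: "dyck_accepts k dyck_init \<pi>" and st: "foldl (dyck_step k) dyck_init \<pi> = (L, j, A, D)"
  shows "kdyck k \<pi> \<and> area k \<pi> = A"
proof -
  have "area_inv k \<pi> (length \<pi>) (L, j, A, D)"
    using dyck_accepts_area_inv [OF acc, of "length \<pi>"] st by (simp add: dyck_state_def)
  then have rank: "int (length L) = srank k \<pi> (length \<pi>) + 1"
    and letters: "filter (\<lambda>x. x \<noteq> W) \<pi> = map S [0..<j]"
    and area: "A = (\<Sum>i<j. nat (srank k \<pi> (pos_of \<pi> (S i))))"
    by (simp_all add: area_inv_def)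
  have j: "j = length k" and "length L = 1"
    using acc st by (simp_all add: dyck_accepts_iff)
  then have "int (sum_list k) = int (length \<pi> - length k)"
    using rank letters srank_length [of \<pi> k] by simp
  moreover have "length k \<le> length \<pi>"
    using letters j length_filter_le [of "\<lambda>x. x \<noteq> W" \<pi>] by simp
  ultimately have "length \<pi> = sum_list k + length k"
    by simp
  moreover have "\<forall>i<length \<pi>. 0 \<le> srank k \<pi> i"
  proof (intro allI impI)
    fix i assume "i < length \<pi>"
    then have "area_inv k \<pi> i (dyck_state k \<pi> i)"
      using dyck_accepts_area_inv [OF acc] by simp
    then show "0 \<le> srank k \<pi> i"
      by (cases "dyck_state k \<pi> i") (auto simp: area_inv_def neq_Nil_conv)
  qed
  ultimately have "kdyck k \<pi>"
    using letters j unfolding kdyck_def by blast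
  moreover have "area k \<pi> = A"
    using area j by (simp add: area_def)
  ultimately show ?thesis ..
qed

section \<open>The filling and ranking algorithms\<close>

definition open_cells :: "nat list \<Rightarrow> nat list list \<Rightarrow> nat list \<Rightarrow> (nat \<times> nat) list" where
  "open_cells k cols cs = concat (map (\<lambda>c. map (Pair c) [length (cols ! c)..<Suc (k ! c)]) cs)"

lemma open_cells_Nil [simp]: "open_cells k cols [] = []"
  by (simp add: open_cells_def)

lemma open_cells_Cons:
  "open_cells k cols (c # cs) = map (Pair c) [length (cols ! c)..<Suc (k ! c)] @ open_cells k cols cs"
  by (simp add: open_cells_def)

lemma open_cells_cong:
  "(\<And>d. d \<in> set cs \<Longrightarrow> cols' ! d = cols ! d) \<Longrightarrow> open_cells k cols' cs = open_cells k cols cs"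
  unfolding open_cells_def by (induction cs) auto

lemma fst_open_cells: "x \<in> set (open_cells k cols cs) \<Longrightarrow> fst x \<in> set cs"
  unfolding open_cells_def by auto

lemma open_cells_append_entry:
  assumes "c < length cols" "c \<notin> set cs"
  shows "open_cells k (cols[c := cols ! c @ [x]]) (if length (cols ! c) < k ! c then c # cs else cs)
    = map (Pair c) [Suc (length (cols ! c))..<Suc (k ! c)] @ open_cells k cols cs"
proof -
  have "open_cells k (cols[c := cols ! c @ [x]]) cs = open_cells k cols cs"
    using assms(2) by (intro open_cells_cong) (metis nth_list_update_neq)
  then show ?thesis
    using assms(1) by (simp add: open_cells_Cons)
qed

lemma open_cells_new_column:
  assumes "j < length cols" "j \<notin> set cs"
  shows "open_cells k (cols[j := [x]]) (j # cs) = map (Pair j) [1..<Suc (k ! j)] @ open_cells k cols cs"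
proof -
  have "open_cells k (cols[j := [x]]) cs = open_cells k cols cs"
    using assms(2) by (intro open_cells_cong) (metis nth_list_update_neq)
  then show ?thesis
    using assms(1) by (simp add: open_cells_Cons)
qed

definition tableau_wf :: "nat list \<Rightarrow> nat \<Rightarrow> nat \<Rightarrow> nat list list \<Rightarrow> bool" where
  "tableau_wf k n j cols \<longleftrightarrow>
     length cols = length k \<and> j \<le> length k
   \<and> (\<forall>c<length k. cols ! c \<noteq> [] \<longleftrightarrow> c < j)
   \<and> (\<forall>c<length k. sorted_wrt (<) (cols ! c) \<and> (\<forall>x\<in>set (cols ! c). x \<le> n))
   \<and> (\<forall>c<length k. \<forall>d<length k. c \<noteq> d \<longrightarrow> set (cols ! c) \<inter> set (cols ! d) = {})"

lemma tableau_wf_entry_le: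
  "tableau_wf k n j cols \<Longrightarrow> c < length k \<Longrightarrow> x \<in> set (cols ! c) \<Longrightarrow> x \<le> n"
  by (simp add: tableau_wf_def)

lemma tableau_wf_append_entry:
  assumes wf: "tableau_wf k n j cols" and c: "c < j"
  shows "tableau_wf k (Suc n) j (cols[c := cols ! c @ [Suc n]])"
  unfolding tableau_wf_def
proof (intro conjI allI impI)
  let ?cols' = "cols[c := cols ! c @ [Suc n]]"
  have lengths: "length cols = length k" "j \<le> length k"
    using wf by (simp_all add: tableau_wf_def)
  have upd: "?cols' ! e = (if e = c then cols ! c @ [Suc n] else cols ! e)" for e
    using lengths c by simp
  have old: "sorted_wrt (<) (cols ! e) \<and> (\<forall>x\<in>set (cols ! e). x \<le> n)" if "e < length k" for e
    using wf that by (simp add: tableau_wf_def)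
  show "length ?cols' = length k" "j \<le> length k"
    using lengths by simp_all
  fix d assume d: "d < length k"
  show "?cols' ! d \<noteq> [] \<longleftrightarrow> d < j"
    using wf c d by (simp add: upd tableau_wf_def)
  show "sorted_wrt (<) (?cols' ! d)" "\<forall>x\<in>set (?cols' ! d). x \<le> Suc n"
    using old [OF d] by (auto simp: upd sorted_wrt_append le_imp_less_Suc)
  have fresh: "Suc n \<notin> set (cols ! e)" if "e < length k" for e
    using old [OF that] Suc_n_not_le_n by blast
  fix e assume e: "e < length k" "d \<noteq> e"
  then show "set (?cols' ! d) \<inter> set (?cols' ! e) = {}"
    using wf d fresh [OF d] fresh [OF e(1)] by (auto simp: tableau_wf_def upd)
qed

lemma tableau_wf_new_column:
  assumes wf: "tableau_wf k n j cols" and j: "j < length k"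
  shows "tableau_wf k (Suc n) (Suc j) (cols[j := [Suc n]])"
  unfolding tableau_wf_def
proof (intro conjI allI impI)
  let ?cols' = "cols[j := [Suc n]]"
  have lengths: "length cols = length k"
    using wf by (simp add: tableau_wf_def)
  have upd: "?cols' ! e = (if e = j then [Suc n] else cols ! e)" for e
    using lengths j by simp
  have old: "sorted_wrt (<) (cols ! e) \<and> (\<forall>x\<in>set (cols ! e). x \<le> n)" if "e < length k" for e
    using wf that by (simp add: tableau_wf_def)
  show "length ?cols' = length k" "Suc j \<le> length k"
    using lengths j by simp_all
  fix d assume d: "d < length k"
  show "?cols' ! d \<noteq> [] \<longleftrightarrow> d < Suc j"
    using wf d by (auto simp: upd tableau_wf_def)
  show "sorted_wrt (<) (?cols' ! d)" "\<forall>x\<in>set (?cols' ! d). x \<le> Suc n"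
    using old [OF d] by (auto simp: upd le_SucI)
  have fresh: "Suc n \<notin> set (cols ! e)" if "e < length k" for e
    using old [OF that] Suc_n_not_le_n by blast
  fix e assume e: "e < length k" "d \<noteq> e"
  then show "set (?cols' ! d) \<inter> set (?cols' ! e) = {}"
    using wf d fresh [OF d] fresh [OF e(1)] by (auto simp: tableau_wf_def upd)
qed

definition active_stack :: "nat list \<Rightarrow> nat list list \<Rightarrow> nat list \<Rightarrow> bool" where
  "active_stack k cols cs \<longleftrightarrow> active_cols k cols = set cs \<and> distinct cs
     \<and> sorted_wrt (\<lambda>c d. last (cols ! d) < last (cols ! c)) cs"

lemma fill_step_W:
  assumes "active_stack k cols (c # cs)"
  shows "fill_step k cols (i, W) = cols[c := cols ! c @ [i]]"
proof -
  have "(ARG_MAX (\<lambda>c. last (cols ! c)) c. c \<in> active_cols k cols) = c"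
  proof (rule arg_maxI [where Q = "\<lambda>x. x = c"])
    show "c \<in> active_cols k cols"
      using assms by (simp add: active_stack_def)
  next
    fix d assume "d \<in> active_cols k cols" "\<forall>y. y \<in> active_cols k cols \<longrightarrow> \<not> last (cols ! d) < last (cols ! y)"
    then show "d = c"
      using assms by (auto simp: active_stack_def)
  qed (use assms in \<open>auto simp: active_stack_def\<close>)
  then show ?thesis
    by (simp add: fill_step_def)
qed

lemma fill_step_S:
  assumes "tableau_wf k n j cols" "j < length k"
  shows "fill_step k cols (i, S x) = cols[j := [i]]"
proof -
  have "(LEAST c. c < length cols \<and> cols ! c = []) = j"
    by (rule Least_equality) (use assms in \<open>auto simp: tableau_wf_def not_le [symmetric]\<close>)
  then show ?thesis
    by (simp add: fill_step_def)
qed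

lemma active_cols_update:
  "c < length cols \<Longrightarrow> d \<in> active_cols k (cols[c := xs]) \<longleftrightarrow>
     (if d = c then c < length k \<and> xs \<noteq> [] \<and> length xs < k ! c + 1 else d \<in> active_cols k cols)"
  by (auto simp: active_cols_def)

lemma active_stack_last_le:
  assumes "tableau_wf k n j cols" "active_stack k cols cs" "d \<in> set cs"
  shows "last (cols ! d) \<le> n"
proof -
  have "d < length k" "cols ! d \<noteq> []"
    using assms(2,3) by (auto simp: active_stack_def active_cols_def)
  moreover have "\<forall>x\<in>set (cols ! d). x \<le> n"
    using assms(1) \<open>d < length k\<close> by (simp add: tableau_wf_def)
  ultimately show ?thesis
    by simp
qed

lemma active_stack_append_entry:
  assumes wf: "tableau_wf k n j cols" and st: "active_stack k cols (c # cs)"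
  shows "active_stack k (cols[c := cols ! c @ [Suc n]])
           (if length (cols ! c) < k ! c then c # cs else cs)"
proof -
  let ?cols' = "cols[c := cols ! c @ [Suc n]]"
  have c: "c < length k" "cols ! c \<noteq> []" "c \<notin> set cs"
    using st by (auto simp: active_stack_def active_cols_def)
  have lengths: "length cols = length k"
    using wf by (simp add: tableau_wf_def)
  have unchanged: "?cols' ! d = cols ! d" if "d \<in> set cs" for d
    using that c(3) by (metis nth_list_update_neq)
  have "sorted_wrt (\<lambda>a b. last (cols ! b) < last (cols ! a)) cs"
    using st by (simp add: active_stack_def)
  then have "sorted_wrt (\<lambda>a b. last (?cols' ! b) < last (?cols' ! a)) cs"
    by (rule sorted_wrt_mono_rel [rotated]) (simp add: unchanged)
  moreover have "\<forall>d\<in>set cs. last (?cols' ! d) < last (?cols' ! c)"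
    using active_stack_last_le [OF wf st] unchanged c(1) lengths by (simp add: less_Suc_eq_le)
  moreover have "active_cols k ?cols' = (if length (cols ! c) < k ! c then insert c (set cs) else set cs)"
  proof (rule set_eqI)
    fix d
    have "active_cols k cols = insert c (set cs)"
      using st by (simp add: active_stack_def)
    then show "d \<in> active_cols k ?cols' \<longleftrightarrow> d \<in> (if length (cols ! c) < k ! c then insert c (set cs) else set cs)"
      using c lengths by (auto simp: active_cols_update)
  qed
  ultimately show ?thesis
    using st c by (simp add: active_stack_def)
qed

lemma active_stack_new_column:
  assumes wf: "tableau_wf k n j cols" and st: "active_stack k cols cs"
    and j: "j < length k" "0 < k ! j"
  shows "active_stack k (cols[j := [Suc n]]) (j # cs)"
proof -
  let ?cols' = "cols[j := [Suc n]]"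
  have lengths: "length cols = length k" and empty: "cols ! j = []"
    using wf j by (auto simp: tableau_wf_def)
  then have j_new: "j \<notin> set cs"
    using st by (auto simp: active_stack_def active_cols_def)
  then have unchanged: "?cols' ! d = cols ! d" if "d \<in> set cs" for d
    using that by (metis nth_list_update_neq)
  have "sorted_wrt (\<lambda>a b. last (cols ! b) < last (cols ! a)) cs"
    using st by (simp add: active_stack_def)
  then have "sorted_wrt (\<lambda>a b. last (?cols' ! b) < last (?cols' ! a)) cs"
    by (rule sorted_wrt_mono_rel [rotated]) (simp add: unchanged)
  moreover have "\<forall>d\<in>set cs. last (?cols' ! d) < last (?cols' ! j)"
    using active_stack_last_le [OF wf st] unchanged j(1) lengths by (simp add: less_Suc_eq_le)
  moreover have "active_cols k ?cols' = insert j (set cs)"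
  proof (rule set_eqI)
    fix d
    have "active_cols k cols = set cs"
      using st by (simp add: active_stack_def)
    then show "d \<in> active_cols k ?cols' \<longleftrightarrow> d \<in> insert j (set cs)"
      using j lengths by (auto simp: active_cols_update)
  qed
  ultimately show ?thesis
    using st j_new by (simp add: active_stack_def)
qed

definition parent_links ::
  "nat \<Rightarrow> nat list list \<Rightarrow> (nat \<Rightarrow> nat) \<Rightarrow> (nat \<Rightarrow> nat) \<Rightarrow> (nat \<Rightarrow> nat) \<Rightarrow> bool" where
  "parent_links j cols \<beta> par pos \<longleftrightarrow> \<beta> 0 = 0 \<and>
     (\<forall>c. 1 \<le> c \<and> c < j \<longrightarrow> par c < c \<and> pos c < length (cols ! par c)
        \<and> cols ! par c ! pos c = hd (cols ! c) - 1 \<and> \<beta> c = \<beta> (par c) + pos c)"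

lemma parent_links_append_entry:
  assumes links: "parent_links j cols \<beta> par pos" and c: "c < length cols" "cols ! c \<noteq> []"
  shows "parent_links j (cols[c := cols ! c @ [x]]) \<beta> par pos"
proof -
  have upd: "cols[c := cols ! c @ [x]] ! e = (if e = c then cols ! c @ [x] else cols ! e)" for e
    using c by simp
  have "pos d < length (cols[c := cols ! c @ [x]] ! par d)
      \<and> cols[c := cols ! c @ [x]] ! par d ! pos d = hd (cols[c := cols ! c @ [x]] ! d) - 1"
    if "par d < d" "pos d < length (cols ! par d)" "cols ! par d ! pos d = hd (cols ! d) - 1" for d
    using that c by (auto simp: upd nth_append)
  then show ?thesis
    using links unfolding parent_links_def by blast
qed

lemma parent_links_new_column:
  assumes links: "parent_links j cols \<beta> par pos" and j: "j < length cols"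
    and cur: "c0 < j" "p0 < length (cols ! c0)" "cols ! c0 ! p0 = n"
  shows "parent_links (Suc j) (cols[j := [Suc n]]) (\<beta>(j := \<beta> c0 + p0)) (par(j := c0)) (pos(j := p0))"
proof -
  let ?cols' = "cols[j := [Suc n]]" and ?\<beta>' = "\<beta>(j := \<beta> c0 + p0)"
    and ?par' = "par(j := c0)" and ?pos' = "pos(j := p0)"
  have "?par' c < c \<and> ?pos' c < length (?cols' ! ?par' c)
      \<and> ?cols' ! ?par' c ! ?pos' c = hd (?cols' ! c) - 1 \<and> ?\<beta>' c = ?\<beta>' (?par' c) + ?pos' c"
    if c: "1 \<le> c" "c < Suc j" for c
  proof (cases "c = j")
    case True
    then show ?thesis
      using cur j by simp
  next
    case False
    then have "c < j" "par c < c"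
      using c links by (auto simp: parent_links_def)
    then show ?thesis
      using c links False by (simp add: parent_links_def)
  qed
  moreover have "?\<beta>' 0 = 0"
    using links cur by (simp add: parent_links_def)
  ultimately show ?thesis
    by (simp add: parent_links_def)
qed

text \<open>\<open>\<beta> c\<close> is the rank \<open>\<gamma>\<^sub>*\<close> gives to the top of column \<open>c\<close>, \<open>cs\<close> lists the active columns by
  decreasing last entry, and \<open>(c0, p0)\<close> is the cell of the latest entry \<open>n\<close>.\<close>

definition fill_inv :: "nat list \<Rightarrow> nat \<Rightarrow> nat list list \<Rightarrow> state \<Rightarrow> bool" where
  "fill_inv k n cols st \<longleftrightarrow> (case st of (L, j, A, D) \<Rightarrow>
     \<exists>cs \<beta> par pos c0 p0. tableau_wf k n j cols \<and> active_stack k cols cs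
       \<and> parent_links j cols \<beta> par pos
       \<and> c0 < j \<and> p0 < length (cols ! c0) \<and> cols ! c0 ! p0 = n
       \<and> map snd L = map (\<lambda>(c, p). \<beta> c + p) ((c0, p0) # open_cells k cols cs)
       \<and> D = (\<Sum>c<j. \<beta> c))"

lemma fill_invI:
  assumes "tableau_wf k n j cols" "active_stack k cols cs" "parent_links j cols \<beta> par pos"
    "c0 < j" "p0 < length (cols ! c0)" "cols ! c0 ! p0 = n"
    "map snd L = map (\<lambda>(c, p). \<beta> c + p) ((c0, p0) # open_cells k cols cs)" "D = (\<Sum>c<j. \<beta> c)"
  shows "fill_inv k n cols (L, j, A, D)"
  using assms unfolding fill_inv_def by blast

lemma fill_inv_W:
  assumes inv: "fill_inv k n cols (L, j, A, D)" and L: "2 \<le> length L"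
  shows "fill_inv k (Suc n) (fill_step k cols (Suc n, W)) (tl L, j, A, D)"
proof -
  obtain cs \<beta> par pos c0 p0 where wf: "tableau_wf k n j cols" and st: "active_stack k cols cs"
    and links: "parent_links j cols \<beta> par pos"
    and ranks: "map snd L = map (\<lambda>(c, p). \<beta> c + p) ((c0, p0) # open_cells k cols cs)"
    and D: "D = (\<Sum>c<j. \<beta> c)"
    using inv by (auto simp: fill_inv_def)
  have "cs \<noteq> []"
    using arg_cong [OF ranks, of length] L by auto
  then obtain c cs' where cs: "cs = c # cs'"
    by (cases cs) auto
  have c: "c < length k" "cols ! c \<noteq> []" "length (cols ! c) < Suc (k ! c)" "c \<notin> set cs'"
    using st cs by (auto simp: active_stack_def active_cols_def)
  have lengths: "length cols = length k" "c < j"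
    using wf c by (simp_all add: tableau_wf_def)
  define len where "len = length (cols ! c)"
  define cols' where "cols' = cols[c := cols ! c @ [Suc n]]"
  define cs'' where "cs'' = (if len < k ! c then c # cs' else cs')"
  have col_c: "cols' ! c = cols ! c @ [Suc n]"
    using c lengths by (simp add: cols'_def)
  have "open_cells k cols' cs'' = map (Pair c) [Suc len..<Suc (k ! c)] @ open_cells k cols cs'"
    using open_cells_append_entry [of c cols cs'] c lengths by (simp add: cols'_def cs''_def len_def)
  moreover have "open_cells k cols cs = (c, len) # map (Pair c) [Suc len..<Suc (k ! c)] @ open_cells k cols cs'"
    using c(3) by (simp add: cs open_cells_Cons upt_conv_Cons len_def)
  ultimately have ranks': "map snd (tl L) = map (\<lambda>(c, p). \<beta> c + p) ((c, len) # open_cells k cols' cs'')"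
    using ranks by (simp add: map_tl)
  have "fill_step k cols (Suc n, W) = cols'"
    using fill_step_W st cs by (simp add: cols'_def)
  moreover have "tableau_wf k (Suc n) j cols'"
    using tableau_wf_append_entry [OF wf lengths(2)] by (simp add: cols'_def)
  moreover have "active_stack k cols' cs''"
    using active_stack_append_entry [OF wf] st cs by (simp add: cols'_def cs''_def len_def)
  moreover have "parent_links j cols' \<beta> par pos"
    using parent_links_append_entry [OF links] c lengths by (simp add: cols'_def)
  ultimately show ?thesis
    using fill_invI [OF _ _ _ lengths(2) _ _ ranks' D] col_c by (simp add: len_def)
qed

lemma fill_inv_S:
  assumes inv: "fill_inv k n cols (L, j, A, D)" and j: "j < length k" "0 < k ! j"
  shows "fill_inv k (Suc n) (fill_step k cols (Suc n, S i))
           (column_cells (k ! j) (hd L) @ tl L, Suc j, A', D + snd (hd L))"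
proof -
  obtain cs \<beta> par pos c0 p0 where wf: "tableau_wf k n j cols" and st: "active_stack k cols cs"
    and links: "parent_links j cols \<beta> par pos"
    and cur: "c0 < j" "p0 < length (cols ! c0)" "cols ! c0 ! p0 = n"
    and ranks: "map snd L = map (\<lambda>(c, p). \<beta> c + p) ((c0, p0) # open_cells k cols cs)"
    and D: "D = (\<Sum>c<j. \<beta> c)"
    using inv by (auto simp: fill_inv_def)
  have lengths: "length cols = length k" and empty: "cols ! j = []"
    using wf j by (auto simp: tableau_wf_def)
  then have j_new: "j \<notin> set cs"
    using st by (auto simp: active_stack_def active_cols_def)
  have "L \<noteq> []"
    using ranks by auto
  then have hd_L: "snd (hd L) = \<beta> c0 + p0"
    using arg_cong [OF ranks, of hd] by (simp add: hd_map)
  define cols' where "cols' = cols[j := [Suc n]]"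
  define \<beta>' where "\<beta>' = \<beta>(j := \<beta> c0 + p0)"
  have "open_cells k cols' (j # cs) = map (Pair j) [1..<Suc (k ! j)] @ open_cells k cols cs"
    using open_cells_new_column [of j cols cs] j_new j lengths by (simp add: cols'_def)
  moreover have "map (\<lambda>(c, p). \<beta>' c + p) (open_cells k cols cs) = map (\<lambda>(c, p). \<beta> c + p) (open_cells k cols cs)"
    using j_new fst_open_cells by (fastforce simp: \<beta>'_def)
  moreover have "map snd (column_cells (k ! j) (hd L)) = map (\<lambda>(c, p). \<beta>' c + p) ((j, 0) # map (Pair j) [1..<Suc (k ! j)])"
    by (simp add: column_cells_def hd_L \<beta>'_def upt_conv_Cons del: upt_Suc)
  ultimately have ranks': "map snd (column_cells (k ! j) (hd L) @ tl L)
      = map (\<lambda>(c, p). \<beta>' c + p) ((j, 0) # open_cells k cols' (j # cs))"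
    using ranks by (simp add: map_tl)
  have "fill_step k cols (Suc n, S i) = cols'"
    using fill_step_S [OF wf j(1)] by (simp add: cols'_def)
  moreover have "tableau_wf k (Suc n) (Suc j) cols'"
    using tableau_wf_new_column [OF wf j(1)] by (simp add: cols'_def)
  moreover have "active_stack k cols' (j # cs)"
    using active_stack_new_column [OF wf st j] by (simp add: cols'_def)
  moreover have "parent_links (Suc j) cols' \<beta>' (par(j := c0)) (pos(j := p0))"
    using parent_links_new_column [OF links _ cur] j lengths by (simp add: cols'_def \<beta>'_def)
  moreover have "D + snd (hd L) = (\<Sum>c<Suc j. \<beta>' c)"
    using D hd_L by (simp add: \<beta>'_def)
  moreover have "cols' ! j = [Suc n]"
    using j lengths by (simp add: cols'_def)
  ultimately show ?thesis
    using fill_invI [of k "Suc n" "Suc j" cols' "j # cs" \<beta>' _ _ j 0, OF _ _ _ _ _ _ ranks'] by simp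
qed

lemma fill_inv_foldl:
  assumes kpos: "\<forall>c<length k. 0 < k ! c"
  shows "fill_inv k n cols st \<Longrightarrow> dyck_accepts k st v \<Longrightarrow>
    fill_inv k (n + length v) (foldl (fill_step k) cols (zip [Suc n..<Suc n + length v] v))
      (foldl (dyck_step k) st v)"
proof (induction v arbitrary: n cols st)
  case (Cons x v)
  obtain L j A D where st: "st = (L, j, A, D)"
    by (cases st)
  have "fill_inv k (Suc n) (fill_step k cols (Suc n, x)) (dyck_step k st x)"
  proof (cases x)
    case (S i)
    then show ?thesis
      using Cons.prems st kpos fill_inv_S by simp
  next
    case W
    then show ?thesis
      using Cons.prems st fill_inv_W by simp
  qed
  moreover have "[Suc n..<Suc n + length (x # v)] = Suc n # [Suc (Suc n)..<Suc (Suc n) + length v]"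
    by (simp add: upt_conv_Cons del: upt_Suc)
  ultimately show ?case
    using Cons.IH [of "Suc n"] Cons.prems by (simp del: upt_Suc)
qed simp

lemma fill_inv_first_column:
  assumes k: "k \<noteq> []" "0 < k ! 0"
  shows "fill_inv k 1 ([1] # replicate (length k - 1) []) (column_cells (k ! 0) (0, 0), 1, A, 0)"
proof -
  define cols :: "nat list list" where "cols = [1] # replicate (length k - 1) []"
  have lengths: "length cols = length k" "1 \<le> length k"
    using k by (simp_all add: cols_def Suc_leI)
  have cols: "cols ! c = (if c = 0 then [1] else [])" if "c < length k" for c
    using that by (cases c) (auto simp: cols_def)
  have col0: "cols ! 0 = [1]"
    by (simp add: cols_def)
  have "tableau_wf k 1 1 cols"
    using lengths by (auto simp: tableau_wf_def cols)
  moreover have "active_stack k cols [0]"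
    using k lengths by (auto simp: active_stack_def active_cols_def cols split: if_splits)
  moreover have "parent_links 1 cols (\<lambda>_. 0) (\<lambda>_. 0) (\<lambda>_. 0)"
    by (simp add: parent_links_def)
  moreover have "map snd (column_cells (k ! 0) (0, 0))
      = map (\<lambda>(c, p). 0 + p) ((0, 0) # open_cells k cols [0])"
    by (simp add: column_cells_def open_cells_def col0 upt_conv_Cons del: upt_Suc)
  ultimately show ?thesis
    unfolding cols_def [symmetric]
    using col0 fill_invI [of k 1 1 cols "[0]" "\<lambda>_. 0" "\<lambda>_. 0" "\<lambda>_. 0" 0 0] by simp
qed

lemma pos_of_nth_distinct: "distinct xs \<Longrightarrow> p < length xs \<Longrightarrow> pos_of xs (xs ! p) = p"
  unfolding pos_of_def by (rule Least_equality) (auto simp: nth_eq_iff_index_eq)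

lemma col_of_eq:
  assumes "c < length T" "x \<in> set (T ! c)"
    and "\<forall>c<length T. \<forall>d<length T. c \<noteq> d \<longrightarrow> set (T ! c) \<inter> set (T ! d) = {}"
  shows "col_of T x = c"
  unfolding col_of_def by (rule the_equality) (use assms in blast)+

lemma bases_parent_links:
  assumes wf: "tableau_wf k n (length k) T" and links: "parent_links (length k) T \<beta> par pos"
    and k: "k \<noteq> []"
  shows "bases T = map \<beta> [0..<length k]"
proof -
  let ?g = "\<lambda>bs c. bs @ [(let A = hd (T ! c) - 1; c' = col_of T A in bs ! c' + pos_of (T ! c') A)]"
  have "foldl ?g [0] [1..<m] = map \<beta> [0..<m]" if "1 \<le> m" "m \<le> length k" for m
    using that
  proof (induction m rule: nat_induct_at_least)
    case base
    then show ?case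
      using links by (simp add: parent_links_def)
  next
    case (Suc m)
    have P: "par m < m" "pos m < length (T ! par m)" "T ! par m ! pos m = hd (T ! m) - 1"
      "\<beta> m = \<beta> (par m) + pos m"
      using links Suc by (simp_all add: parent_links_def)
    have par: "par m < length T"
      using P Suc wf by (simp add: tableau_wf_def)
    have "hd (T ! m) - 1 \<in> set (T ! par m)"
      using nth_mem [OF P(2)] P(3) by simp
    then have "col_of T (hd (T ! m) - 1) = par m"
      using col_of_eq [OF par] wf by (simp add: tableau_wf_def)
    moreover have "distinct (T ! par m)"
      using wf par by (simp add: tableau_wf_def strict_sorted_iff)
    then have "pos_of (T ! par m) (hd (T ! m) - 1) = pos m"
      using pos_of_nth_distinct P by metis
    ultimately show ?case
      using Suc P by (simp add: Let_def)
  qed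
  moreover have "1 \<le> length k" "length T = length k"
    using k wf by (simp_all add: Suc_le_eq tableau_wf_def)
  ultimately show ?thesis
    by (simp add: bases_def)
qed

lemma depth_dyck_accepts:
  assumes acc: "dyck_accepts k dyck_init \<pi>" and kpos: "\<forall>c<length k. 0 < k ! c" and k: "k \<noteq> []"
    and st: "foldl (dyck_step k) dyck_init \<pi> = (L, j, A, D)"
  shows "depth k \<pi> = D"
proof -
  obtain v where \<pi>: "\<pi> = S 0 # v"
  proof (cases \<pi>)
    case Nil
    then show ?thesis
      using acc k by (simp add: dyck_init_def)
  next
    case (Cons x v)
    then have "x = S 0"
      using acc by (cases x) (simp_all add: dyck_init_def)
    then show ?thesis
      using Cons that by simp
  qed
  have acc_v: "dyck_accepts k (column_cells (k ! 0) (0, 0), 1, 0, 0) v"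
    and st_v: "foldl (dyck_step k) (column_cells (k ! 0) (0, 0), 1, 0, 0) v = (L, j, A, D)"
    using acc st by (simp_all add: \<pi> dyck_init_def)
  have fill: "fill k \<pi> = foldl (fill_step k) ([1] # replicate (length k - 1) [])
      (zip [Suc 1..<Suc 1 + length v] v)"
    by (simp add: fill_def \<pi> numeral_2_eq_2 del: upt_Suc)
  have "0 < k ! 0"
    using kpos k by simp
  then have "fill_inv k (1 + length v) (fill k \<pi>) (L, j, A, D)"
    using fill_inv_foldl [OF kpos fill_inv_first_column [OF k] acc_v] unfolding fill st_v by blast
  then obtain cs \<beta> par pos where "tableau_wf k (1 + length v) j (fill k \<pi>)"
    and "parent_links j (fill k \<pi>) \<beta> par pos" and D: "D = (\<Sum>c<j. \<beta> c)"
    by (auto simp: fill_inv_def)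
  moreover have j: "j = length k"
    using acc st by (simp add: dyck_accepts_iff)
  ultimately have "bases (fill k \<pi>) = map \<beta> [0..<length k]"
    using bases_parent_links k by blast
  then show ?thesis
    using D j by (simp add: depth_def interv_sum_list_conv_sum_set_nat atLeast0LessThan)
qed

definition weight :: "'a::comm_semiring_1 \<Rightarrow> 'a \<Rightarrow> state \<Rightarrow> 'a" where
  "weight q t st = (case st of (L, j, A, D) \<Rightarrow> q ^ A * t ^ D)"

definition accepts_weight :: "nat list \<Rightarrow> 'a::comm_semiring_1 \<Rightarrow> 'a \<Rightarrow> state \<Rightarrow> 'a" where
  "accepts_weight k q t st = (\<Sum>v | dyck_accepts k st v. weight q t (foldl (dyck_step k) st v))"

lemma dyck_accepts_set:
  "{v. dyck_accepts k (L, j, A, D) v} =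
     (if dyck_final k (L, j, A, D) then {[]} else {})
     \<union> (if j < length k then Cons (S j) ` {v. dyck_accepts k (dyck_step k (L, j, A, D) (S j)) v} else {})
     \<union> (if 2 \<le> length L then Cons W ` {v. dyck_accepts k (tl L, j, A, D) v} else {})"
proof (rule set_eqI)
  fix v
  show "v \<in> {v. dyck_accepts k (L, j, A, D) v} \<longleftrightarrow> v \<in> (if dyck_final k (L, j, A, D) then {[]} else {})
     \<union> (if j < length k then Cons (S j) ` {v. dyck_accepts k (dyck_step k (L, j, A, D) (S j)) v} else {})
     \<union> (if 2 \<le> length L then Cons W ` {v. dyck_accepts k (tl L, j, A, D) v} else {})"
  proof (cases v)
    case (Cons x w)
    then show ?thesis
      by (cases x) auto
  qed (auto simp del: dyck_final.simps)
qed

lemma accepts_weight_Cons_image: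
  assumes "dyck_step k st a = st'"
  shows "(\<Sum>v\<in>Cons a ` {v. dyck_accepts k st' v}. weight q t (foldl (dyck_step k) st v))
     = accepts_weight k q t st'"
  using assms by (simp add: sum.reindex accepts_weight_def)

lemma accepts_weight_unfold:
  fixes q t :: "'a::comm_semiring_1"
  assumes "j < length k \<Longrightarrow> finite {v. dyck_accepts k (dyck_step k (L, j, A, D) (S j)) v}"
    and "2 \<le> length L \<Longrightarrow> finite {v. dyck_accepts k (tl L, j, A, D) v}"
  shows "finite {v. dyck_accepts k (L, j, A, D) v} \<and> accepts_weight k q t (L, j, A, D) =
      (if dyck_final k (L, j, A, D) then q ^ A * t ^ D else 0)
    + (if j < length k then accepts_weight k q t (dyck_step k (L, j, A, D) (S j)) else 0)
    + (if 2 \<le> length L then accepts_weight k q t (tl L, j, A, D) else 0)"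
proof -
  let ?st = "(L, j, A, D)" and ?f = "\<lambda>v. weight q t (foldl (dyck_step k) (L, j, A, D) v)"
  define X1 :: "letter list set" where "X1 = (if dyck_final k ?st then {[]} else {})"
  define X2 where "X2 = (if j < length k then Cons (S j) ` {v. dyck_accepts k (dyck_step k ?st (S j)) v} else {})"
  define X3 where "X3 = (if 2 \<le> length L then Cons W ` {v. dyck_accepts k (tl L, j, A, D) v} else {})"
  have runs: "{v. dyck_accepts k ?st v} = X1 \<union> X2 \<union> X3"
    unfolding X1_def X2_def X3_def by (rule dyck_accepts_set)
  have finite: "finite X1" "finite X2" "finite X3"
    using assms by (simp_all add: X1_def X2_def X3_def)
  have "sum ?f X1 = (if dyck_final k ?st then q ^ A * t ^ D else 0)"
    by (simp add: X1_def weight_def)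
  moreover have "sum ?f X2 = (if j < length k then accepts_weight k q t (dyck_step k ?st (S j)) else 0)"
    by (simp add: X2_def accepts_weight_Cons_image)
  moreover have "sum ?f X3 = (if 2 \<le> length L then accepts_weight k q t (tl L, j, A, D) else 0)"
    by (simp add: X3_def accepts_weight_Cons_image)
  moreover have "X1 \<inter> X2 = {}" "(X1 \<union> X2) \<inter> X3 = {}"
    by (auto simp: X1_def X2_def X3_def)
  ultimately show ?thesis
    using finite by (simp add: accepts_weight_def runs sum.union_disjoint)
qed

lemma accepts_weight_completions:
  assumes "\<forall>i. 1 \<le> i \<and> i < length k \<longrightarrow> k ! i = b" "L \<noteq> []" "1 \<le> j" "j \<le> length k"
  shows "finite {v. dyck_accepts k (L, j, A, D) v}
    \<and> accepts_weight k q t (L, j, A, D) = q ^ A * t ^ D * completions b q t L (length k - j)"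
  using assms
proof (induction b q t L "length k - j" arbitrary: j A D rule: completions.induct)
  case (2 b q t x j A D)
  have "finite {v. dyck_accepts k (column_cells b x, Suc j, A + fst x, D + snd x) v}
      \<and> accepts_weight k q t (column_cells b x, Suc j, A + fst x, D + snd x)
        = q ^ (A + fst x) * t ^ (D + snd x) * completions b q t (column_cells b x) (length k - Suc j)"
    if "j < length k"
    using 2 that by (intro "2.hyps") auto
  moreover have "k ! j = b" if "j < length k"
    using 2 that by simp
  ultimately show ?case
    using accepts_weight_unfold [of j k "[x]" A D q t] 2 by (auto simp: power_add ac_simps)
next
  case (3 b q t x y L j A D)
  have "finite {v. dyck_accepts k (column_cells b x @ y # L, Suc j, A + fst x, D + snd x) v}
      \<and> accepts_weight k q t (column_cells b x @ y # L, Suc j, A + fst x, D + snd x)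
        = q ^ (A + fst x) * t ^ (D + snd x) * completions b q t (column_cells b x @ y # L) (length k - Suc j)"
    if "j < length k"
    using 3 that by (intro "3.hyps"(2)) auto
  moreover have "finite {v. dyck_accepts k (y # L, j, A, D) v}
      \<and> accepts_weight k q t (y # L, j, A, D) = q ^ A * t ^ D * completions b q t (y # L) (length k - j)"
    using 3 by (intro "3.hyps"(1)) auto
  moreover have "k ! j = b" if "j < length k"
    using 3 that by simp
  ultimately show ?case
    using accepts_weight_unfold [of j k "x # y # L" A D q t] 3 by (auto simp: power_add algebra_simps)
qed simp

lemma Dyck_eq_dyck_accepts: "Dyck k = {\<pi>. dyck_accepts k dyck_init \<pi>}"
proof (rule set_eqI)
  fix \<pi>
  obtain L j A D where "foldl (dyck_step k) dyck_init \<pi> = (L, j, A, D)"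
    by (cases "foldl (dyck_step k) dyck_init \<pi>")
  then show "\<pi> \<in> Dyck k \<longleftrightarrow> \<pi> \<in> {\<pi>. dyck_accepts k dyck_init \<pi>}"
    using kdyck_imp_dyck_accepts dyck_accepts_imp_kdyck_area by (auto simp: Dyck_def)
qed

lemma Ctil_eq_accepts_weight:
  assumes "\<forall>c<length k. 0 < k ! c" "k \<noteq> []"
  shows "Ctil k q t = accepts_weight k q t dyck_init"
  unfolding Ctil_def accepts_weight_def Dyck_eq_dyck_accepts
proof (rule sum.cong)
  fix \<pi> assume "\<pi> \<in> {\<pi>. dyck_accepts k dyck_init \<pi>}"
  moreover obtain L j A D where "foldl (dyck_step k) dyck_init \<pi> = (L, j, A, D)"
    by (cases "foldl (dyck_step k) dyck_init \<pi>")
  ultimately show "q ^ area k \<pi> * t ^ depth k \<pi> = weight q t (foldl (dyck_step k) dyck_init \<pi>)"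
    using dyck_accepts_imp_kdyck_area depth_dyck_accepts assms by (simp add: weight_def)
qed simp

lemma accepts_weight_init:
  assumes "k \<noteq> []"
  shows "accepts_weight k q t dyck_init = accepts_weight k q t (column_cells (k ! 0) (0, 0), 1, 0, 0)"
proof -
  have step: "dyck_step k dyck_init (S 0) = (column_cells (k ! 0) (0, 0), 1, 0, 0)"
    by (simp add: dyck_init_def)
  have "{v. dyck_accepts k dyck_init v} = Cons (S 0) ` {v. dyck_accepts k (column_cells (k ! 0) (0, 0), 1, 0, 0) v}"
    using assms step unfolding dyck_init_def by (subst dyck_accepts_set) simp
  then show ?thesis
    using accepts_weight_Cons_image [OF step, of q t] by (simp add: accepts_weight_def)
qed

lemma Ctil_eq_completions:
  assumes "0 < a" "0 < b"
  shows "Ctil (a # replicate n b) q t = completions b q t (column_cells a (0, 0)) n"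
proof -
  let ?k = "a # replicate n b"
  have tail: "\<forall>i. 1 \<le> i \<and> i < length ?k \<longrightarrow> ?k ! i = b"
    by (auto simp: nth_Cons')
  have "\<forall>c<length ?k. 0 < ?k ! c"
    using assms by (auto simp: nth_Cons')
  then have "Ctil ?k q t = accepts_weight ?k q t dyck_init"
    by (rule Ctil_eq_accepts_weight) simp
  also have "\<dots> = accepts_weight ?k q t (column_cells a (0, 0), 1, 0, 0)"
    using accepts_weight_init [of ?k] by simp
  also have "\<dots> = completions b q t (column_cells a (0, 0)) n"
    using accepts_weight_completions [OF tail, of "column_cells a (0, 0)" 1 0 0 q t] by simp
  finally show ?thesis .
qed

lemma Ctil_symmetric:
  assumes "0 < a" "0 < b"
  shows "Ctil (a # replicate n b) q t = Ctil (a # replicate n b) t q"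
  using Ctil_eq_completions [OF assms] completions_column_symmetric by metis

theorem corollary5p2:
  shows "(\<forall>(a::nat) (b::nat) (m::nat) (q::'a::comm_semiring_1) t.
            0 < a \<longrightarrow> 0 < b \<longrightarrow> 2 \<le> m \<longrightarrow>
            Ctil (a # replicate (m - 1) b) q t = Ctil (a # replicate (m - 1) b) t q)
       \<and> (\<forall>(k::nat list) (q::'a) t.
            length k = 2 \<longrightarrow> (\<forall>x\<in>set k. 0 < x) \<longrightarrow> Ctil k q t = Ctil k t q)"
proof (intro conjI allI impI)
  fix a b m :: nat and q t :: 'a
  assume "0 < a" "0 < b"
  then show "Ctil (a # replicate (m - 1) b) q t = Ctil (a # replicate (m - 1) b) t q"
    by (rule Ctil_symmetric)
next
  fix k :: "nat list" and q t :: 'a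
  assume "length k = 2" "\<forall>x\<in>set k. 0 < x"
  then obtain a b where "k = a # replicate 1 b" "0 < a" "0 < b"
    by (auto simp: numeral_2_eq_2 length_Suc_conv)
  then show "Ctil k q t = Ctil k t q"
    using Ctil_symmetric by blast
qed

end
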